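(* Let $s>2$ be an integer, $A_s=\{0,1,\dots,s-1\}$, and let $A_0,A_1$ be disjoint subsets of $A_s$ with $A_0\cup A_1=A_s$, $A_0\neq A_s\neq A_1$. For a sequence $(\alpha_n)\in L_s$ define $(\beta_n)$ by $\beta_1=0$ if $\alpha_1\in A_0$, $\beta_1=1$ if $\alpha_1\in A_1$, and for $n\ge1$, $\beta_{n+1}=\beta_n$ if $\alpha_{n+1}=\alpha_n$ and $\beta_{n+1}=1-\beta_n$ if $\alpha_{n+1}\neq\alpha_n$, and set $F((\alpha_n))=\Delta^{2*}_{\beta_1\beta_2\dots}$. Then $f(\Delta^{s*}_{\alpha_1\alpha_2\dots})=F((\alpha_n))$ well defines a function $f:[0,1]\to[0,1]$; that is, whenever $(\alpha_n),(\alpha'_n)\in L_s$ satisfy $\Delta^{s*}_{\alpha_1\alpha_2\dots}=\Delta^{s*}_{\alpha'_1\alpha'_2\dots}$, we have $F((\alpha_n))=F((\alpha'_n))$.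
   Context: $L_s=A_s\times A_s\times\cdots$ denotes the space of sequences $(\alpha_n)$ with $\alpha_n\in A_s$. The $s*$-representation is an encoding of $[0,1]$ topologically equivalent to the classical $s$-adic one: there is a continuous strictly monotone surjection $h_s:[0,1]\to[0,1]$ such that $\Delta^{s*}_{\alpha_1\alpha_2\dots}=h_s\big(\sum_{n\ge1}\alpha_n s^{-n}\big)$ for every $(\alpha_n)\in L_s$. Likewise the $2*$-representation is given by a continuous strictly monotone surjection $h_2:[0,1]\to[0,1]$ via $\Delta^{2*}_{\beta_1\beta_2\dots}=h_2\big(\sum_{n\ge1}\beta_n 2^{-n}\big)$, $\beta_n\in\{0,1\}$. *)

theory Defs
  imports "HOL-Analysis.Analysis"
begin

text \<open>Sequences are indexed from 0: a 0 plays the role of alpha_1.\<close>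

definition digit_seq :: "nat \<Rightarrow> (nat \<Rightarrow> nat) \<Rightarrow> bool" where
  "digit_seq s a \<longleftrightarrow> (\<forall>n. a n < s)"

definition adic_val :: "nat \<Rightarrow> (nat \<Rightarrow> nat) \<Rightarrow> real" where
  "adic_val s a = (\<Sum>n. real (a n) / real s ^ Suc n)"

text \<open>Encoding Delta^{s*} via the homeomorphism h.\<close>
definition Delta_star :: "(real \<Rightarrow> real) \<Rightarrow> nat \<Rightarrow> (nat \<Rightarrow> nat) \<Rightarrow> real" where
  "Delta_star h s a = h (adic_val s a)"

definition admissible_h :: "(real \<Rightarrow> real) \<Rightarrow> bool" where
  "admissible_h h \<longleftrightarrow> continuous_on {0..1} h \<and> strict_mono_on {0..1} h \<and> h ` {0..1} = {0..1}"

fun beta :: "nat set \<Rightarrow> nat set \<Rightarrow> (nat \<Rightarrow> nat) \<Rightarrow> nat \<Rightarrow> nat" where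
  "beta A0 A1 a 0 = (if a 0 \<in> A0 then 0 else 1)"
| "beta A0 A1 a (Suc n) = (if a (Suc n) = a n then beta A0 A1 a n else 1 - beta A0 A1 a n)"

end

theory Submission
  imports Defs
begin

text \<open>Two digit sequences with the same s-adic value either coincide or, at the first
  index k where they differ, carry over: the digits there are d and d + 1, followed by
  all digits s - 1 and all digits 0 respectively. Either way the digit at position k + 1
  differs from the one at k and the digits are constant from k + 1 on, so beta flips once
  after position k and stays constant. Hence both beta sequences are binary expansions of the common prefix plus
  2^-(k+1), whatever their value at k.\<close>

lemma digit_seq_le_max:
  assumes "digit_seq s a"
  shows "a n \<le> s - 1"
  using assms unfolding digit_seq_def by (metis less_Suc_eq_le Suc_pred' gr_zeroI less_nat_zero_code)

lemma summable_adic_terms: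
  assumes "s \<ge> 2" and "digit_seq s a"
  shows "summable (\<lambda>n. real (a n) / real s ^ Suc n)"
proof (rule summable_comparison_test[of _ "\<lambda>n. (1 / real s) ^ n"])
  show "summable (\<lambda>n. (1 / real s) ^ n)"
    using assms(1) by (intro summable_geometric) auto
  have "real (a n) / real s ^ Suc n \<le> (1 / real s) ^ n" for n
  proof -
    have "real (a n) / real s ^ Suc n \<le> real s / real s ^ Suc n"
      using assms by (intro divide_right_mono) (auto simp: digit_seq_def less_imp_le)
    also have "\<dots> = (1 / real s) ^ n"
      using assms(1) by (simp add: power_divide)
    finally show ?thesis .
  qed
  then show "\<exists>N. \<forall>n\<ge>N. norm (real (a n) / real s ^ Suc n) \<le> (1 / real s) ^ n"
    by auto
qed

lemma adic_val_nonneg: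
  assumes "s \<ge> 2" and "digit_seq s a"
  shows "adic_val s a \<ge> 0"
  unfolding adic_val_def by (rule suminf_nonneg[OF summable_adic_terms[OF assms]]) simp

lemma adic_val_eq_0_iff:
  assumes "s \<ge> 2" and "digit_seq s a"
  shows "adic_val s a = 0 \<longleftrightarrow> (\<forall>n. a n = 0)"
  unfolding adic_val_def
  using suminf_eq_zero_iff[OF summable_adic_terms[OF assms]] assms(1) by simp

lemma adic_val_max_digits:
  assumes "s \<ge> 2"
  shows "adic_val s (\<lambda>_. s - 1) = 1"
proof -
  have "(\<lambda>n. (1 - 1 / real s) * (1 / real s) ^ n) sums ((1 - 1 / real s) * (1 / (1 - 1 / real s)))"
    using assms by (intro sums_mult geometric_sums) auto
  moreover have "(1 - 1 / real s) * (1 / real s) ^ n = real (s - 1) / real s ^ Suc n" for n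
    using assms by (simp add: of_nat_diff power_divide field_simps)
  ultimately show ?thesis
    using assms unfolding adic_val_def by (simp add: sums_iff)
qed

lemma adic_val_complement:
  assumes "s \<ge> 2" and "digit_seq s a"
  shows "adic_val s (\<lambda>n. s - 1 - a n) = 1 - adic_val s a"
proof -
  have "digit_seq s (\<lambda>_. s - 1)"
    using assms(1) by (simp add: digit_seq_def)
  have "1 - adic_val s a
      = (\<Sum>n. real (s - 1) / real s ^ Suc n) - (\<Sum>n. real (a n) / real s ^ Suc n)"
    using adic_val_max_digits[OF assms(1)] unfolding adic_val_def by simp
  also have "\<dots> = (\<Sum>n. real (s - 1) / real s ^ Suc n - real (a n) / real s ^ Suc n)"
    using summable_adic_terms[OF assms(1) \<open>digit_seq s (\<lambda>_. s - 1)\<close>]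
      summable_adic_terms[OF assms] by (rule suminf_diff)
  also have "\<dots> = adic_val s (\<lambda>n. s - 1 - a n)"
    unfolding adic_val_def
  proof (rule suminf_cong)
    fix n
    have "real (s - 1 - a n) = real (s - 1) - real (a n)"
      using digit_seq_le_max[OF assms(2)] by (rule of_nat_diff)
    then show "real (s - 1) / real s ^ Suc n - real (a n) / real s ^ Suc n
        = real (s - 1 - a n) / real s ^ Suc n"
      by (simp only: diff_divide_distrib)
  qed
  finally show ?thesis ..
qed

lemma adic_val_le_1:
  assumes "s \<ge> 2" and "digit_seq s a"
  shows "adic_val s a \<le> 1"
proof -
  have "digit_seq s (\<lambda>n. s - 1 - a n)"
    using assms(1) by (auto simp: digit_seq_def)
  then show ?thesis
    using adic_val_nonneg[OF assms(1)] adic_val_complement[OF assms] by fastforce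
qed

lemma adic_val_eq_1_iff:
  assumes "s \<ge> 2" and "digit_seq s a"
  shows "adic_val s a = 1 \<longleftrightarrow> (\<forall>n. a n = s - 1)"
proof -
  have "digit_seq s (\<lambda>n. s - 1 - a n)"
    using assms(1) by (auto simp: digit_seq_def)
  then have "adic_val s a = 1 \<longleftrightarrow> (\<forall>n. s - 1 - a n = 0)"
    using adic_val_eq_0_iff[OF assms(1)] adic_val_complement[OF assms] by fastforce
  also have "\<dots> \<longleftrightarrow> (\<forall>n. a n = s - 1)"
  proof -
    have "s - 1 - a n = 0 \<longleftrightarrow> a n = s - 1" for n
      using digit_seq_le_max[OF assms(2), of n] by arith
    then show ?thesis by simp
  qed
  finally show ?thesis .
qed

lemma adic_val_split:
  assumes "s \<ge> 2" and "digit_seq s a"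
  shows "adic_val s a
    = (\<Sum>n<m. real (a n) / real s ^ Suc n) + adic_val s (\<lambda>n. a (n + m)) / real s ^ m"
proof -
  have "digit_seq s (\<lambda>n. a (n + m))"
    using assms(2) by (simp add: digit_seq_def)
  then have "adic_val s (\<lambda>n. a (n + m)) / real s ^ m
      = (\<Sum>n. real (a (n + m)) / real s ^ Suc (n + m))"
    unfolding adic_val_def using summable_adic_terms[OF assms(1)]
    by (simp add: suminf_divide[symmetric] power_add mult.commute mult.left_commute)
  then show ?thesis
    unfolding adic_val_def
    using suminf_split_initial_segment[OF summable_adic_terms[OF assms], of m] by simp
qed

lemma adic_val_eq_first_diff:
  assumes s: "s \<ge> 2" and a: "digit_seq s a" and b: "digit_seq s b"
    and eq: "adic_val s a = adic_val s b"
    and agree: "\<And>n. n < k \<Longrightarrow> a n = b n" and lt: "a k < b k"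
  shows "b k = Suc (a k) \<and> (\<forall>n>k. a n = s - 1) \<and> (\<forall>n>k. b n = 0)"
proof -
  define ta where "ta = (\<lambda>n. a (n + Suc k))"
  define tb where "tb = (\<lambda>n. b (n + Suc k))"
  have ta: "digit_seq s ta" and tb: "digit_seq s tb"
    using a b by (simp_all add: ta_def tb_def digit_seq_def)
  have "(\<Sum>n<k. real (a n) / real s ^ Suc n) = (\<Sum>n<k. real (b n) / real s ^ Suc n)"
    using agree by simp
  then have "(real (a k) + adic_val s ta) / real s ^ Suc k
      = (real (b k) + adic_val s tb) / real s ^ Suc k"
    using eq adic_val_split[OF s a, of "Suc k"] adic_val_split[OF s b, of "Suc k"]
    unfolding ta_def tb_def by (simp add: add_divide_distrib)
  then have "real (a k) + adic_val s ta = real (b k) + adic_val s tb"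
    using s by simp
  moreover have "real (a k) + 1 \<le> real (b k)"
    using lt by simp
  moreover note adic_val_nonneg[OF s tb] adic_val_le_1[OF s ta]
  ultimately have "adic_val s ta = 1" "adic_val s tb = 0" "real (b k) = real (a k) + 1"
    by linarith+
  then have "\<forall>n. ta n = s - 1" "\<forall>n. tb n = 0" "b k = Suc (a k)"
    using adic_val_eq_1_iff[OF s ta] adic_val_eq_0_iff[OF s tb] by simp_all
  moreover have "n = (n - Suc k) + Suc k" if "n > k" for n
    using that by simp
  ultimately show ?thesis
    unfolding ta_def tb_def by metis
qed

lemma digit_seq_beta: "digit_seq 2 (beta A0 A1 a)"
proof -
  have "beta A0 A1 a n \<le> 1" for n
    by (induction n) auto
  then show ?thesis
    by (simp add: digit_seq_def less_Suc_eq_le numeral_2_eq_2)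
qed

lemma beta_cong_prefix:
  assumes "\<And>n. n < k \<Longrightarrow> a n = b n" and "n < k"
  shows "beta A0 A1 a n = beta A0 A1 b n"
  using assms(2) by (induction n) (auto simp: assms(1))

lemma beta_constant_tail:
  assumes "\<And>n. n > k \<Longrightarrow> a n = c" and "c \<noteq> a k" and "n > k"
  shows "beta A0 A1 a n = 1 - beta A0 A1 a k"
  using assms(3)
proof (induction n)
  case 0
  then show ?case by simp
next
  case (Suc m)
  show ?case
  proof (cases "m = k")
    case True
    then show ?thesis using assms(1,2) by simp
  next
    case False
    then have "m > k" using Suc.prems by simp
    then show ?thesis using Suc.IH assms(1)[of m] assms(1)[of "Suc m"] by simp
  qed
qed

lemma adic_val_2_flipped_tail:
  assumes bin: "digit_seq 2 b" and flip: "\<And>n. n > k \<Longrightarrow> b n = 1 - b k"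
  shows "adic_val 2 b = (\<Sum>n<k. real (b n) / 2 ^ Suc n) + 1 / 2 ^ Suc k"
proof -
  have tail: "(\<lambda>n. b (n + Suc k)) = (\<lambda>_. 1 - b k)"
    using flip by auto
  have "adic_val 2 (\<lambda>_. 1 - b k) = 1 - real (b k)"
  proof (cases "b k = 0")
    case True
    then show ?thesis using adic_val_max_digits[of 2] by simp
  next
    case False
    then have "b k = 1"
      using digit_seq_le_max[OF bin, of k] by simp
    then show ?thesis by (simp add: adic_val_def)
  qed
  then show ?thesis
    using adic_val_split[OF _ bin, of "Suc k"] tail by (simp add: add_divide_distrib diff_divide_distrib)
qed

lemma adic_val_beta_eq_first_diff:
  assumes s: "s \<ge> 2" and a: "digit_seq s a" and b: "digit_seq s b"
    and eq: "adic_val s a = adic_val s b"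
    and agree: "\<And>n. n < k \<Longrightarrow> a n = b n" and lt: "a k < b k"
  shows "adic_val 2 (beta A0 A1 a) = adic_val 2 (beta A0 A1 b)"
proof -
  have carry: "b k = Suc (a k)" "\<And>n. n > k \<Longrightarrow> a n = s - 1" "\<And>n. n > k \<Longrightarrow> b n = 0"
    using adic_val_eq_first_diff[OF assms] by auto
  have "s - 1 \<noteq> a k"
    using carry(1) digit_seq_le_max[OF b, of k] by simp
  then have "\<And>n. n > k \<Longrightarrow> beta A0 A1 a n = 1 - beta A0 A1 a k"
    using beta_constant_tail carry(2) by metis
  then have "adic_val 2 (beta A0 A1 a) = (\<Sum>n<k. real (beta A0 A1 a n) / 2 ^ Suc n) + 1 / 2 ^ Suc k"
    by (rule adic_val_2_flipped_tail[OF digit_seq_beta])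
  also have "\<dots> = (\<Sum>n<k. real (beta A0 A1 b n) / 2 ^ Suc n) + 1 / 2 ^ Suc k"
    using beta_cong_prefix[OF agree] by simp
  also have "\<dots> = adic_val 2 (beta A0 A1 b)"
  proof -
    have "\<And>n. n > k \<Longrightarrow> beta A0 A1 b n = 1 - beta A0 A1 b k"
      using beta_constant_tail[of k b 0] carry(1,3) by simp
    then show ?thesis
      by (rule adic_val_2_flipped_tail[OF digit_seq_beta, symmetric])
  qed
  finally show ?thesis .
qed

lemma adic_val_beta_eq:
  assumes s: "s \<ge> 2" and a: "digit_seq s a" and b: "digit_seq s b"
    and eq: "adic_val s a = adic_val s b"
  shows "adic_val 2 (beta A0 A1 a) = adic_val 2 (beta A0 A1 b)"
proof (cases "a = b")
  case False
  then obtain m where "a m \<noteq> b m" by auto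
  define k where "k = (LEAST n. a n \<noteq> b n)"
  have "a k \<noteq> b k"
    unfolding k_def by (rule LeastI[of _ m]) fact
  moreover have agree: "\<And>n. n < k \<Longrightarrow> a n = b n"
    unfolding k_def using not_less_Least by blast
  ultimately consider "a k < b k" | "b k < a k"
    by linarith
  then show ?thesis
  proof cases
    case 1
    then show ?thesis using adic_val_beta_eq_first_diff[OF s a b eq agree] by blast
  next
    case 2
    then show ?thesis
      using adic_val_beta_eq_first_diff[OF s b a eq[symmetric]] agree by metis
  qed
qed simp

theorem lemma2:
  fixes s :: nat and A0 A1 :: "nat set" and hs h2 :: "real \<Rightarrow> real"
    and a a' :: "nat \<Rightarrow> nat"
  assumes "s > 2"
    and "A0 \<inter> A1 = {}" and "A0 \<union> A1 = {..<s}"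
    and "A0 \<noteq> {..<s}" and "A1 \<noteq> {..<s}"
    and "admissible_h hs" and "admissible_h h2"
    and "digit_seq s a" and "digit_seq s a'"
    and "Delta_star hs s a = Delta_star hs s a'"
  shows "Delta_star h2 2 (beta A0 A1 a) = Delta_star h2 2 (beta A0 A1 a')"
proof -
  have s: "s \<ge> 2"
    using assms(1) by simp
  have "inj_on hs {0..1}"
    using assms(6) strict_mono_on_imp_inj_on unfolding admissible_h_def by blast
  moreover have "adic_val s a \<in> {0..1}" "adic_val s a' \<in> {0..1}"
    using adic_val_nonneg[OF s] adic_val_le_1[OF s] assms(8,9) by auto
  ultimately have "adic_val s a = adic_val s a'"
    using assms(10) unfolding Delta_star_def by (meson inj_onD)
  then show ?thesis
    unfolding Delta_star_def using adic_val_beta_eq[OF s assms(8,9)] by simp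
qed

end
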